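(* Let $X$ be a compactum, let $n\geq2$, let $B\in F_n(X)$, and let $f:X\to X$ be a function. Consider the statements: (1) each $x\in B$ is a transitive point of $f$; (2) $B$ is a transitive point of $F_n(f)$; (3) $q(B)$ is a transitive point of $SF_n(f)$. Then (2) and (3) are equivalent and (2) implies (1). Moreover, (1) does not imply (2) in general: there exist such $X$, $n$, $f$ and $B$ for which (1) holds but (2) fails.
   Context: A compactum is a nondegenerate compact, perfect, Hausdorff topological space. $F_n(X)$ is the set of nonempty subsets of $X$ with at most $n$ points, with the Vietoris topology; $F_1(X)=\{\{x\}:x\in X\}$; $F_n(f)(A)=f(A)$. $SF_n(X)=F_n(X)/F_1(X)$ is the quotient collapsing $F_1(X)$ to a point, $q$ the quotient map, $F_X=q(F_1(X))$, and $SF_n(f)(\chi)=q(F_n(f)(q^{-1}(\chi)))$ for $\chi\neq F_X$, $SF_n(f)(F_X)=F_X$. A point $z$ is a transitive point of $g:Z\to Z$ if its orbit $\{g^k(z):k\in\mathbb{Z}_+\}$ is dense in $Z$. *)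

theory Defs
  imports "HOL-Analysis.Analysis"
begin

definition compactum :: "'a topology \<Rightarrow> bool" where
  "compactum X \<longleftrightarrow> compact_space X \<and> Hausdorff_space X
     \<and> X derived_set_of (topspace X) = topspace X
     \<and> (\<exists>x\<in>topspace X. \<exists>y\<in>topspace X. x \<noteq> y)"

definition Fn :: "'a topology \<Rightarrow> nat \<Rightarrow> 'a set set" where
  "Fn X n = {A. A \<subseteq> topspace X \<and> A \<noteq> {} \<and> finite A \<and> card A \<le> n}"

definition F1 :: "'a topology \<Rightarrow> 'a set set" where
  "F1 X = {{x} | x. x \<in> topspace X}"

definition vietoris :: "'a topology \<Rightarrow> 'a set topology" where
  "vietoris X = topology_generated_by
     ({{A. A \<subseteq> U} | U. openin X U} \<union> {{A. A \<subseteq> topspace X \<and> A \<inter> U \<noteq> {}} | U. openin X U})"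

definition Fn_top :: "'a topology \<Rightarrow> nat \<Rightarrow> 'a set topology" where
  "Fn_top X n = subtopology (vietoris X) (Fn X n)"

definition Fnf :: "('a \<Rightarrow> 'a) \<Rightarrow> 'a set \<Rightarrow> 'a set" where
  "Fnf f A = f ` A"

text \<open>The quotient map q : F_n(X) \<rightarrow> SF_n(X) collapsing F_1(X) to the point F_X = F_1(X);
  other points A are represented by the class {A}.\<close>
definition qmap :: "'a topology \<Rightarrow> 'a set \<Rightarrow> 'a set set" where
  "qmap X A = (if A \<in> F1 X then F1 X else {A})"

definition SF_top :: "'a topology \<Rightarrow> nat \<Rightarrow> 'a set set topology" where
  "SF_top X n = topology (\<lambda>U. U \<subseteq> qmap X ` Fn X n \<and>
       openin (Fn_top X n) {A \<in> Fn X n. qmap X A \<in> U})"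

definition SFf :: "'a topology \<Rightarrow> ('a \<Rightarrow> 'a) \<Rightarrow> 'a set set \<Rightarrow> 'a set set" where
  "SFf X f C = (if C = F1 X then F1 X else qmap X (Fnf f (the_elem C)))"

definition transitive_point :: "'b topology \<Rightarrow> ('b \<Rightarrow> 'b) \<Rightarrow> 'b \<Rightarrow> bool" where
  "transitive_point Z g z \<longleftrightarrow> z \<in> topspace Z \<and>
     Z closure_of (range (\<lambda>k. (g ^^ k) z)) = topspace Z"

end

theory Submission
  imports Defs
begin

text \<open>The singletons \<open>F\<^sub>1(X)\<close> form a closed subset of \<open>F\<^sub>n(X)\<close> (as \<open>X\<close> is Hausdorff)
  with empty interior: since \<open>X\<close> is perfect, every Vietoris neighbourhood of \<open>{x}\<close> contains
  a doubleton \<open>{x, y}\<close>. Off \<open>F\<^sub>1(X)\<close> the quotient map \<open>q\<close> is injective and open, and \<open>q\<close>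
  semiconjugates \<open>F\<^sub>n(f)\<close> to \<open>SF\<^sub>n(f)\<close>; hence the orbit of \<open>B\<close> is dense iff that of \<open>q(B)\<close>
  is. A dense orbit of \<open>B\<close> meets every box \<open>{A. A \<subseteq> U}\<close>, which contains a singleton, so it
  carries every point of \<open>B\<close> into \<open>U\<close>.

  For the counterexample, let \<open>f\<close> on \<open>[0,1]\<close> step through an enumeration of the rationals in
  \<open>(0,1)\<close> and send every other point to its first term. Then \<open>0\<close> and \<open>1\<close> have dense orbits,
  but \<open>f({0,1})\<close> is already a singleton, so the orbit of \<open>{0,1}\<close> never enters the open set
  of non-singletons avoiding \<open>0\<close>.\<close>

lemma transitive_point_iff_orbit_meets_open:
  "transitive_point Z g z \<longleftrightarrow>
     z \<in> topspace Z \<and> (\<forall>W. openin Z W \<and> W \<noteq> {} \<longrightarrow> (\<exists>k. (g ^^ k) z \<in> W))"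
  unfolding transitive_point_def dense_intersects_open by blast

lemma transitive_point_semiconj_image:
  assumes h: "continuous_map Z Y h" "h ` topspace Z = topspace Y"
    and semiconj: "\<And>k. (g' ^^ k) (h z) = h ((g ^^ k) z)"
    and z: "transitive_point Z g z"
  shows "transitive_point Y g' (h z)"
proof -
  have "topspace Y = h ` (Z closure_of range (\<lambda>k. (g ^^ k) z))"
    using h(2) z unfolding transitive_point_def by simp
  also have "\<dots> \<subseteq> Y closure_of (h ` range (\<lambda>k. (g ^^ k) z))"
    using h(1) by (rule continuous_map_image_closure_subset)
  also have "h ` range (\<lambda>k. (g ^^ k) z) = range (\<lambda>k. (g' ^^ k) (h z))"
    by (auto simp: semiconj image_image)
  finally show ?thesis
    using h(2) z closure_of_subset_topspace unfolding transitive_point_def by fastforce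
qed

lemma transitive_point_semiconj_preimage:
  assumes orbit: "\<And>k. (g ^^ k) z \<in> topspace Z"
    and semiconj: "\<And>k. (g' ^^ k) (h z) = h ((g ^^ k) z)"
    and shrink: "\<And>W. openin Z W \<Longrightarrow> W \<noteq> {} \<Longrightarrow>
                   \<exists>V. openin Y V \<and> V \<noteq> {} \<and> {x \<in> topspace Z. h x \<in> V} \<subseteq> W"
    and hz: "transitive_point Y g' (h z)"
  shows "transitive_point Z g z"
  unfolding transitive_point_iff_orbit_meets_open
proof (intro conjI allI impI)
  show "z \<in> topspace Z" using orbit[of 0] by simp
  fix W assume "openin Z W \<and> W \<noteq> {}"
  then obtain V where V: "openin Y V" "V \<noteq> {}" "{x \<in> topspace Z. h x \<in> V} \<subseteq> W"
    using shrink by blast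
  then obtain k where "h ((g ^^ k) z) \<in> V"
    using hz semiconj unfolding transitive_point_iff_orbit_meets_open by metis
  then show "\<exists>k. (g ^^ k) z \<in> W" using V(3) orbit by blast
qed

section \<open>The Vietoris topology on \<open>F\<^sub>n(X)\<close>\<close>

lemma Fn_subset_topspace_vietoris: "Fn X n \<subseteq> topspace (vietoris X)"
proof -
  have "{A. A \<subseteq> topspace X} \<in> {{A. A \<subseteq> U} | U. openin X U}" by blast
  then show ?thesis unfolding vietoris_def Fn_def topology_generated_by_topspace by blast
qed

lemma topspace_Fn_top [simp]: "topspace (Fn_top X n) = Fn X n"
  using Fn_subset_topspace_vietoris[of X n] unfolding Fn_top_def by auto

lemma openin_Fn_top_subset:
  assumes "openin X U"
  shows "openin (Fn_top X n) {A \<in> Fn X n. A \<subseteq> U}"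
proof -
  have "openin (vietoris X) {A. A \<subseteq> U}"
    unfolding vietoris_def using assms by (intro topology_generated_by_Basis) blast
  moreover have "{A \<in> Fn X n. A \<subseteq> U} = {A. A \<subseteq> U} \<inter> Fn X n" by auto
  ultimately show ?thesis unfolding Fn_top_def openin_subtopology by blast
qed

lemma openin_Fn_top_meets:
  assumes "openin X U"
  shows "openin (Fn_top X n) {A \<in> Fn X n. A \<inter> U \<noteq> {}}"
proof -
  have "openin (vietoris X) {A. A \<subseteq> topspace X \<and> A \<inter> U \<noteq> {}}"
    unfolding vietoris_def using assms by (intro topology_generated_by_Basis) blast
  moreover have "{A \<in> Fn X n. A \<inter> U \<noteq> {}} = {A. A \<subseteq> topspace X \<and> A \<inter> U \<noteq> {}} \<inter> Fn X n"
    by (auto simp: Fn_def)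
  ultimately show ?thesis unfolding Fn_top_def openin_subtopology by blast
qed

lemma openin_Fn_top_diff_F1:
  assumes "Hausdorff_space X"
  shows "openin (Fn_top X n) (Fn X n - F1 X)"
proof (subst openin_subopen, intro ballI)
  fix A assume A: "A \<in> Fn X n - F1 X"
  then have AX: "A \<subseteq> topspace X" and "A \<noteq> {}" by (auto simp: Fn_def)
  then obtain a where a: "a \<in> A" by blast
  have "A \<noteq> {a}" using A a AX unfolding F1_def by blast
  then obtain b where b: "b \<in> A" "a \<noteq> b" using a by blast
  then obtain U V where UV: "openin X U" "openin X V" "a \<in> U" "b \<in> V" "disjnt U V"
    using assms a AX unfolding Hausdorff_space_def by (meson subsetD)
  let ?T = "{C \<in> Fn X n. C \<inter> U \<noteq> {}} \<inter> {C \<in> Fn X n. C \<inter> V \<noteq> {}}"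
  have "openin (Fn_top X n) ?T"
    using UV by (intro openin_Int openin_Fn_top_meets)
  moreover have "A \<in> ?T" using A a b UV by blast
  moreover have "?T \<inter> F1 X = {}"
    using UV(5) unfolding F1_def disjnt_def by blast
  ultimately show "\<exists>T. openin (Fn_top X n) T \<and> A \<in> T \<and> T \<subseteq> Fn X n - F1 X" by blast
qed

lemma openin_vietoris_singleton_imp_doubletons:
  assumes "openin (vietoris X) V" and x: "x \<in> topspace X" "{x} \<in> V"
  shows "\<exists>N. openin X N \<and> x \<in> N \<and> (\<forall>y\<in>N. {x, y} \<in> V)"
proof -
  have "generate_topology_on
     ({{A. A \<subseteq> U} | U. openin X U} \<union> {{A. A \<subseteq> topspace X \<and> A \<inter> U \<noteq> {}} | U. openin X U}) V"
    using assms(1) unfolding vietoris_def openin_topology_generated_by_iff .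
  then show ?thesis using x(2)
  proof (induction rule: generate_topology_on.induct)
    case Empty
    then show ?case by simp
  next
    case (Int a b)
    obtain Na where "openin X Na" "x \<in> Na" "\<forall>y\<in>Na. {x, y} \<in> a"
      using Int.IH(1) Int.prems by blast
    moreover obtain Nb where "openin X Nb" "x \<in> Nb" "\<forall>y\<in>Nb. {x, y} \<in> b"
      using Int.IH(2) Int.prems by blast
    ultimately have "openin X (Na \<inter> Nb) \<and> x \<in> Na \<inter> Nb \<and> (\<forall>y\<in>Na \<inter> Nb. {x, y} \<in> a \<inter> b)"
      by (simp add: openin_Int)
    then show ?case by blast
  next
    case (UN K)
    then obtain k where "k \<in> K" "{x} \<in> k" by blast
    then show ?case using UN.IH by (meson UnionI)
  next
    case (Basis s)
    then consider U where "openin X U" "s = {A. A \<subseteq> U}"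
      | U where "openin X U" "s = {A. A \<subseteq> topspace X \<and> A \<inter> U \<noteq> {}}" by blast
    then show ?case
    proof cases
      case (1 U)
      then show ?thesis using Basis.prems by (intro exI[of _ U]) auto
    next
      case (2 U)
      then show ?thesis using Basis.prems x(1) by (intro exI[of _ "topspace X"]) auto
    qed
  qed
qed

lemma openin_Fn_top_not_subset_F1:
  assumes perfect: "X derived_set_of topspace X = topspace X" and "n \<ge> 2"
    and W: "openin (Fn_top X n) W" "W \<noteq> {}"
  shows "\<not> W \<subseteq> F1 X"
proof
  assume sub: "W \<subseteq> F1 X"
  obtain x where xW: "{x} \<in> W" and x: "x \<in> topspace X"
    using W(2) sub unfolding F1_def by auto
  obtain V where V: "openin (vietoris X) V" "W = V \<inter> Fn X n"
    using W(1) unfolding Fn_top_def openin_subtopology by blast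
  have "{x} \<in> V" using xW unfolding V(2) by simp
  then obtain N where N: "openin X N" "x \<in> N" "\<forall>y\<in>N. {x, y} \<in> V"
    using openin_vietoris_singleton_imp_doubletons[OF V(1) x] by blast
  have "x \<in> X derived_set_of topspace X" using perfect x by simp
  then obtain y where y: "y \<in> N" "y \<in> topspace X" "y \<noteq> x"
    using N(1,2) unfolding in_derived_set_of by blast
  have "card {x, y} \<le> n" using \<open>n \<ge> 2\<close> by (simp add: card_insert_if)
  then have "{x, y} \<in> Fn X n" using x y(2) unfolding Fn_def by simp
  then have "{x, y} \<in> W" using N(3) y(1) unfolding V(2) by simp
  moreover have "{x, y} \<notin> F1 X" using y(3) unfolding F1_def by (auto simp: doubleton_eq_iff)
  ultimately show False using sub by blast
qed

section \<open>The quotient \<open>SF\<^sub>n(X)\<close> and the induced maps\<close>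

lemma openin_SF_top:
  "openin (SF_top X n) U \<longleftrightarrow>
     U \<subseteq> qmap X ` Fn X n \<and> openin (Fn_top X n) {A \<in> Fn X n. qmap X A \<in> U}"
proof -
  have "istopology (\<lambda>U. U \<subseteq> qmap X ` Fn X n \<and>
          openin (Fn_top X n) {A \<in> Fn X n. qmap X A \<in> U})"
    unfolding istopology_def
  proof (intro conjI allI impI)
    fix S T :: "'a set set set"
    assume S: "S \<subseteq> qmap X ` Fn X n \<and> openin (Fn_top X n) {A \<in> Fn X n. qmap X A \<in> S}"
      and T: "T \<subseteq> qmap X ` Fn X n \<and> openin (Fn_top X n) {A \<in> Fn X n. qmap X A \<in> T}"
    show "S \<inter> T \<subseteq> qmap X ` Fn X n" using S by blast
    have "{A \<in> Fn X n. qmap X A \<in> S \<inter> T} =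
        {A \<in> Fn X n. qmap X A \<in> S} \<inter> {A \<in> Fn X n. qmap X A \<in> T}" by blast
    then show "openin (Fn_top X n) {A \<in> Fn X n. qmap X A \<in> S \<inter> T}"
      using S T by (simp only:) (meson openin_Int)
  next
    fix K :: "'a set set set set"
    assume K: "\<forall>S\<in>K. S \<subseteq> qmap X ` Fn X n \<and> openin (Fn_top X n) {A \<in> Fn X n. qmap X A \<in> S}"
    show "\<Union>K \<subseteq> qmap X ` Fn X n" using K by blast
    have "{A \<in> Fn X n. qmap X A \<in> \<Union>K} = (\<Union>S\<in>K. {A \<in> Fn X n. qmap X A \<in> S})" by blast
    then show "openin (Fn_top X n) {A \<in> Fn X n. qmap X A \<in> \<Union>K}"
      using K by (simp only:) (rule openin_Union, blast)
  qed
  then show ?thesis unfolding SF_top_def by simp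
qed

lemma topspace_SF_top [simp]: "topspace (SF_top X n) = qmap X ` Fn X n"
proof
  show "topspace (SF_top X n) \<subseteq> qmap X ` Fn X n"
    unfolding topspace_def using openin_SF_top by blast
  have "{A \<in> Fn X n. qmap X A \<in> qmap X ` Fn X n} = Fn X n" by blast
  then have "openin (SF_top X n) (qmap X ` Fn X n)"
    unfolding openin_SF_top using openin_topspace[of "Fn_top X n"] by simp
  then show "qmap X ` Fn X n \<subseteq> topspace (SF_top X n)" by (rule openin_subset)
qed

lemma continuous_map_qmap: "continuous_map (Fn_top X n) (SF_top X n) (qmap X)"
  unfolding continuous_map_def openin_SF_top by auto

lemma qmap_eq_imp_eq: "C \<notin> F1 X \<Longrightarrow> qmap X A = qmap X C \<Longrightarrow> A = C"
  unfolding qmap_def by (auto split: if_splits)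

lemma vimage_qmap_image:
  assumes "W \<subseteq> Fn X n" "W \<inter> F1 X = {}"
  shows "{A \<in> Fn X n. qmap X A \<in> qmap X ` W} = W"
  using assms qmap_eq_imp_eq[of _ X] by blast

lemma funpow_Fnf: "(Fnf f ^^ k) A = (f ^^ k) ` A"
  by (induction k) (auto simp: Fnf_def image_comp)

lemma Fnf_in_Fn:
  assumes "f ` topspace X \<subseteq> topspace X" "A \<in> Fn X n"
  shows "Fnf f A \<in> Fn X n"
  using assms card_image_le[of A f] unfolding Fn_def Fnf_def by auto

lemma funpow_Fnf_in_Fn:
  "f ` topspace X \<subseteq> topspace X \<Longrightarrow> A \<in> Fn X n \<Longrightarrow> (Fnf f ^^ k) A \<in> Fn X n"
  by (induction k) (auto intro: Fnf_in_Fn)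

lemma SFf_qmap:
  assumes "f ` topspace X \<subseteq> topspace X"
  shows "SFf X f (qmap X A) = qmap X (Fnf f A)"
proof (cases "A \<in> F1 X")
  case True
  then have "Fnf f A \<in> F1 X" using assms unfolding F1_def Fnf_def by auto
  then show ?thesis using True by (simp add: SFf_def qmap_def)
next
  case False
  then have "{A} \<noteq> F1 X" by auto
  then show ?thesis using False by (simp add: SFf_def qmap_def)
qed

lemma funpow_SFf_qmap:
  "f ` topspace X \<subseteq> topspace X \<Longrightarrow> (SFf X f ^^ k) (qmap X A) = qmap X ((Fnf f ^^ k) A)"
  by (induction k) (auto simp: SFf_qmap)

lemma transitive_point_Fn_top_imp_SF_top:
  assumes f: "f ` topspace X \<subseteq> topspace X"
    and B: "transitive_point (Fn_top X n) (Fnf f) B"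
  shows "transitive_point (SF_top X n) (SFf X f) (qmap X B)"
  using continuous_map_qmap _ funpow_SFf_qmap[OF f] B
  by (rule transitive_point_semiconj_image) simp

lemma transitive_point_SF_top_imp_Fn_top:
  assumes X: "Hausdorff_space X" "X derived_set_of topspace X = topspace X" and "n \<ge> 2"
    and f: "f ` topspace X \<subseteq> topspace X" and B: "B \<in> Fn X n"
    and qB: "transitive_point (SF_top X n) (SFf X f) (qmap X B)"
  shows "transitive_point (Fn_top X n) (Fnf f) B"
proof (rule transitive_point_semiconj_preimage[where h = "qmap X"])
  show "(Fnf f ^^ k) B \<in> topspace (Fn_top X n)" for k
    using funpow_Fnf_in_Fn[OF f B] by simp
  show "(SFf X f ^^ k) (qmap X B) = qmap X ((Fnf f ^^ k) B)" for k
    by (rule funpow_SFf_qmap[OF f])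
  show "transitive_point (SF_top X n) (SFf X f) (qmap X B)" by (rule qB)
  fix W assume W: "openin (Fn_top X n) W" "W \<noteq> {}"
  have W_Fn: "W \<subseteq> Fn X n" using openin_subset[OF W(1)] by simp
  have vimage: "{A \<in> Fn X n. qmap X A \<in> qmap X ` (W - F1 X)} = W - F1 X"
    using W_Fn by (intro vimage_qmap_image) auto
  have "W - F1 X = W \<inter> (Fn X n - F1 X)" using W_Fn by blast
  then have "openin (Fn_top X n) (W - F1 X)"
    using W(1) openin_Fn_top_diff_F1[OF X(1)] by (simp add: openin_Int)
  then have "openin (SF_top X n) (qmap X ` (W - F1 X))"
    using W_Fn vimage unfolding openin_SF_top by auto
  moreover have "W - F1 X \<noteq> {}"
    using openin_Fn_top_not_subset_F1[OF X(2) \<open>n \<ge> 2\<close> W] by blast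
  moreover have "{A \<in> topspace (Fn_top X n). qmap X A \<in> qmap X ` (W - F1 X)} \<subseteq> W"
    using vimage by auto
  ultimately show "\<exists>V. openin (SF_top X n) V \<and> V \<noteq> {} \<and>
      {A \<in> topspace (Fn_top X n). qmap X A \<in> V} \<subseteq> W" by blast
qed

lemma transitive_point_Fn_top_iff_SF_top:
  assumes "compactum X" "n \<ge> 2" "B \<in> Fn X n" "f ` topspace X \<subseteq> topspace X"
  shows "transitive_point (Fn_top X n) (Fnf f) B \<longleftrightarrow>
         transitive_point (SF_top X n) (SFf X f) (qmap X B)"
  using assms transitive_point_Fn_top_imp_SF_top transitive_point_SF_top_imp_Fn_top
  unfolding compactum_def by blast

lemma transitive_point_Fn_top_imp_transitive_point:
  assumes "n \<ge> 1" and B: "transitive_point (Fn_top X n) (Fnf f) B" and "x \<in> B"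
  shows "transitive_point X f x"
  unfolding transitive_point_iff_orbit_meets_open
proof (intro conjI allI impI)
  have "B \<in> Fn X n" using B unfolding transitive_point_def by simp
  then show "x \<in> topspace X" using \<open>x \<in> B\<close> unfolding Fn_def by blast
  fix U assume U: "openin X U \<and> U \<noteq> {}"
  then obtain u where u: "u \<in> U" "u \<in> topspace X" using openin_subset by blast
  then have "{u} \<in> {A \<in> Fn X n. A \<subseteq> U}" using \<open>n \<ge> 1\<close> unfolding Fn_def by simp
  then obtain k where "(Fnf f ^^ k) B \<in> {A \<in> Fn X n. A \<subseteq> U}"
    using B openin_Fn_top_subset[of X U n] U
    unfolding transitive_point_iff_orbit_meets_open by blast
  then show "\<exists>k. (f ^^ k) x \<in> U" using \<open>x \<in> B\<close> unfolding funpow_Fnf by blast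
qed

section \<open>A counterexample on the unit interval\<close>

lemma compactum_unit_interval: "compactum (top_of_set {0..1::real})"
  unfolding compactum_def
proof (intro conjI)
  show "compact_space (top_of_set {0..1::real})"
    by (rule compact_space_subtopology) simp
  show "Hausdorff_space (top_of_set {0..1::real})"
    by (rule Hausdorff_space_subtopology) simp
  have "euclidean derived_set_of S = {x. x islimpt S}" for S :: "real set"
    by (auto simp: derived_set_of_def islimpt_def)
  then show "top_of_set {0..1::real} derived_set_of topspace (top_of_set {0..1::real}) =
      topspace (top_of_set {0..1::real})"
    by (auto simp: derived_set_of_subtopology)
  show "\<exists>x\<in>topspace (top_of_set {0..1::real}). \<exists>y\<in>topspace (top_of_set {0..1::real}). x \<noteq> y"
    by (intro bexI[of _ 0] bexI[of _ 1]) auto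
qed

definition unit_rationals :: "real set" where
  "unit_rationals = \<rat> \<inter> {0<..<1}"

lemma closure_unit_rationals: "closure unit_rationals = {0..1}"
proof -
  have "closure ({0<..<1} \<inter> \<rat>) = closure {0<..<1::real}"
    by (rule closure_open_Int_superset) (auto simp: Rats_closure_real)
  then show ?thesis unfolding unit_rationals_def by (simp add: Int_commute)
qed

lemma infinite_unit_rationals: "infinite unit_rationals"
proof
  assume "finite unit_rationals"
  then have "closure unit_rationals = unit_rationals"
    by (simp add: closure_closed finite_imp_closed)
  then show False using closure_unit_rationals unfolding unit_rationals_def by auto
qed

lemma countable_unit_rationals: "countable unit_rationals"
  unfolding unit_rationals_def by (rule countable_subset[OF _ countable_rat]) blast

definition rational_shift :: "real \<Rightarrow> real" where
  "rational_shift x =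
     from_nat_into unit_rationals
       (if x \<in> unit_rationals then Suc (to_nat_on unit_rationals x) else 0)"

lemma from_nat_into_unit_rationals: "from_nat_into unit_rationals k \<in> unit_rationals"
  using infinite_unit_rationals by (intro from_nat_into) auto

lemma rational_shift_in_unit_rationals: "rational_shift x \<in> unit_rationals"
  unfolding rational_shift_def by (rule from_nat_into_unit_rationals)

lemma funpow_rational_shift:
  assumes "x \<notin> unit_rationals"
  shows "(rational_shift ^^ Suc k) x = from_nat_into unit_rationals k"
proof (induction k)
  case 0
  show ?case using assms by (simp add: rational_shift_def)
next
  case (Suc k)
  then show ?case
    using from_nat_into_unit_rationals countable_unit_rationals infinite_unit_rationals
    by (simp add: rational_shift_def)
qed

lemma transitive_point_rational_shift:
  assumes "x \<in> {0..1} - unit_rationals"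
  shows "transitive_point (top_of_set {0..1}) rational_shift x"
proof -
  have "unit_rationals \<subseteq> range (\<lambda>k. (rational_shift ^^ k) x)"
  proof
    fix r assume "r \<in> unit_rationals"
    then obtain k where "r = from_nat_into unit_rationals k"
      using range_from_nat_into[OF _ countable_unit_rationals] by blast
    then show "r \<in> range (\<lambda>k. (rational_shift ^^ k) x)"
      using funpow_rational_shift[of x k] assms by (metis DiffD2 rangeI)
  qed
  then have "top_of_set {0..1} closure_of unit_rationals \<subseteq>
      top_of_set {0..1} closure_of range (\<lambda>k. (rational_shift ^^ k) x)"
    by (rule closure_of_mono)
  moreover have "{0..1} \<inter> unit_rationals = unit_rationals"
    unfolding unit_rationals_def by auto
  then have "top_of_set {0..1} closure_of unit_rationals = {0..1::real}"
    by (simp add: closure_of_subtopology closure_unit_rationals)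
  ultimately have "top_of_set {0..1} closure_of range (\<lambda>k. (rational_shift ^^ k) x) = {0..1}"
    using closure_of_subset_topspace[of "top_of_set {0..1::real}"]
    by (metis subset_antisym topspace_euclidean_subtopology)
  then show ?thesis using assms unfolding transitive_point_def by simp
qed

lemma not_transitive_point_Fn_rational_shift:
  "\<not> transitive_point (Fn_top (top_of_set {0..1}) 2) (Fnf rational_shift) {0, 1}"
proof
  let ?X = "top_of_set {0..1::real}"
  let ?W = "{A \<in> Fn ?X 2. A \<subseteq> {0..1} \<inter> {0<..}} \<inter> (Fn ?X 2 - F1 ?X)"
  assume trans: "transitive_point (Fn_top ?X 2) (Fnf rational_shift) {0, 1}"
  have "Hausdorff_space ?X" using compactum_unit_interval unfolding compactum_def by blast
  moreover have "openin ?X ({0..1} \<inter> {0<..})" by (rule openin_open_Int) simp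
  ultimately have "openin (Fn_top ?X 2) ?W"
    by (intro openin_Int[OF openin_Fn_top_subset openin_Fn_top_diff_F1])
  moreover have "{1/2, 1} \<in> ?W"
    unfolding Fn_def F1_def by (auto simp: doubleton_eq_iff)
  ultimately obtain k where k: "(Fnf rational_shift ^^ k) {0, 1} \<in> ?W"
    using trans unfolding transitive_point_iff_orbit_meets_open by blast
  show False
  proof (cases k)
    case 0
    then show False using k by simp
  next
    case (Suc m)
    have "(Fnf rational_shift ^^ k) {0, 1} = {from_nat_into unit_rationals m}"
      using funpow_rational_shift[of 0 m] funpow_rational_shift[of 1 m]
      unfolding funpow_Fnf Suc unit_rationals_def by simp
    moreover have "from_nat_into unit_rationals m \<in> {0..1}"
      using from_nat_into_unit_rationals[of m] unfolding unit_rationals_def by auto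
    ultimately have "(Fnf rational_shift ^^ k) {0, 1} \<in> F1 ?X"
      unfolding F1_def by auto
    then show False using k by blast
  qed
qed

theorem theorem15:
  shows "(\<forall>(X::'a topology) (n::nat) (B::'a set) (f::'a \<Rightarrow> 'a).
            compactum X \<and> n \<ge> 2 \<and> B \<in> Fn X n \<and> f ` topspace X \<subseteq> topspace X \<longrightarrow>
              (transitive_point (Fn_top X n) (Fnf f) B
                 \<longleftrightarrow> transitive_point (SF_top X n) (SFf X f) (qmap X B))
            \<and> (transitive_point (Fn_top X n) (Fnf f) B
                 \<longrightarrow> (\<forall>x\<in>B. transitive_point X f x)))
       \<and> (\<exists>(X::real topology) (n::nat) (B::real set) (f::real \<Rightarrow> real).
            compactum X \<and> n \<ge> 2 \<and> B \<in> Fn X n \<and> f ` topspace X \<subseteq> topspace X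
            \<and> (\<forall>x\<in>B. transitive_point X f x)
            \<and> \<not> transitive_point (Fn_top X n) (Fnf f) B)"
proof (intro conjI allI impI ballI)
  fix X :: "'a topology" and n B f
  assume hyps: "compactum X \<and> n \<ge> 2 \<and> B \<in> Fn X n \<and> f ` topspace X \<subseteq> topspace X"
  then show "transitive_point (Fn_top X n) (Fnf f) B \<longleftrightarrow>
      transitive_point (SF_top X n) (SFf X f) (qmap X B)"
    using transitive_point_Fn_top_iff_SF_top by blast
  fix x assume "transitive_point (Fn_top X n) (Fnf f) B" "x \<in> B"
  then show "transitive_point X f x"
    using hyps transitive_point_Fn_top_imp_transitive_point[of n] by simp
next
  have "{0, 1} \<in> Fn (top_of_set {0..1::real}) 2" unfolding Fn_def by simp
  moreover have "rational_shift ` {0..1} \<subseteq> {0..1}"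
    using rational_shift_in_unit_rationals unfolding unit_rationals_def
    by (auto simp: image_subset_iff less_imp_le)
  moreover have "\<forall>x\<in>{0, 1}. transitive_point (top_of_set {0..1}) rational_shift x"
    by (intro ballI transitive_point_rational_shift) (auto simp: unit_rationals_def)
  ultimately show "\<exists>(X::real topology) n B f. compactum X \<and> n \<ge> 2 \<and> B \<in> Fn X n \<and>
      f ` topspace X \<subseteq> topspace X \<and> (\<forall>x\<in>B. transitive_point X f x) \<and>
      \<not> transitive_point (Fn_top X n) (Fnf f) B"
    using compactum_unit_interval not_transitive_point_Fn_rational_shift
    by (intro exI[of _ "top_of_set {0..1}"] exI[of _ "2::nat"] exI[of _ "{0, 1}"]
        exI[of _ rational_shift]) simp
qed

end
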